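(* Let $A$ be a subset of the nonnegative real numbers which is well ordered (for the usual order) and which has an accumulation point in $\mathbb R$ for the Euclidean topology. For a positive integer $m$ let $mA=\{x_1+\cdots+x_m\mid x_1,\dots,x_m\in A\}$. Then for every positive integer $m$, $mA$ contains a well ordered subset of ordinal type $\omega^m$.
   Context: $\omega$ denotes the ordinal type of $\mathbb N$ with its usual order. *)

theory Defs
  imports "HOL-Analysis.Analysis"
begin

definition well_ordered_set :: "real set \<Rightarrow> bool" where
  "well_ordered_set A \<longleftrightarrow> (\<forall>S. S \<subseteq> A \<longrightarrow> S \<noteq> {} \<longrightarrow> (\<exists>x\<in>S. \<forall>y\<in>S. x \<le> y))"

definition sumset :: "nat \<Rightarrow> real set \<Rightarrow> real set" where
  "sumset m A = {sum_list xs | xs. length xs = m \<and> set xs \<subseteq> A}"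

text \<open>The ordinal omega^m, realised as the m-tuples of naturals (lists of length m)
  ordered lexicographically with the first coordinate most significant.\<close>
definition omega_pow :: "nat \<Rightarrow> nat list set" where
  "omega_pow m = {xs. length xs = m}"

definition omega_pow_less :: "nat list \<Rightarrow> nat list \<Rightarrow> bool" where
  "omega_pow_less xs ys \<longleftrightarrow> (xs, ys) \<in> lex {(a, b). a < b}"

definition has_type_omega_pow :: "real set \<Rightarrow> nat \<Rightarrow> bool" where
  "has_type_omega_pow B m \<longleftrightarrow>
     (\<exists>f. bij_betw f (omega_pow m) B \<and>
          (\<forall>xs\<in>omega_pow m. \<forall>ys\<in>omega_pow m. omega_pow_less xs ys \<longleftrightarrow> f xs < f ys))"

end

theory Submission
  imports Defs
begin

(* Let x be an accumulation point of the well-ordered set A.  Well-orderedness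
   forces A to approach x from below, so A contains an increasing sequence b below x whose
   distances to x shrink by a factor larger than m at every step:  m (x - b(n+1)) < x - b n.
   An m-tuple of naturals (k_1, ..., k_m) is sent to the m-term sum
       b(k_1) + b(k_1 + k_2) + ... + b(k_1 + ... + k_m),
   an element of mA.  The fast convergence of b makes the first coordinate dominate: increasing
   it by one gains more than all later terms can make up, so this map is strictly monotone for
   the lexicographic order on m-tuples, i.e. on the ordinal omega^m.  Its image is therefore an
   order-isomorphic, hence well-ordered, copy of omega^m inside mA. *)

text \<open>In a well-ordered set of reals every accumulation point is approached from below:
  points of \<open>A\<close> just above \<open>x\<close> would have a least one, which could not accumulate at \<open>x\<close>.\<close>
lemma limit_point_approached_from_below:
  fixes A :: "real set"
  assumes wo: "well_ordered_set A" and lp: "x islimpt A" and e: "e > 0"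
  shows "\<exists>y\<in>A. x - e < y \<and> y < x"
proof (rule ccontr)
  assume none_below: "\<not> ?thesis"
  obtain z where z: "z \<in> A" "z \<noteq> x" "dist z x < e"
    using lp e unfolding islimpt_approachable by blast
  define S where "S = A \<inter> {x<..<x+e}"
  have "z \<in> S" using z none_below by (auto simp: S_def dist_real_def)
  then obtain y where y: "y \<in> S" "\<forall>w\<in>S. y \<le> w"
    using wo unfolding well_ordered_set_def S_def by (metis Int_lower1 empty_iff)
  then have "x < y" by (simp add: S_def)
  then obtain w where w: "w \<in> A" "w \<noteq> x" "dist w x < y - x"
    using lp unfolding islimpt_approachable by (metis diff_gt_0_iff_gt)
  have "w \<in> S" and "w < y"
    using w y(1) none_below by (auto simp: S_def dist_real_def)
  then show False using y(2) by force
qed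

lemma geometric_approach_sequence:
  fixes A :: "real set" and c :: real
  assumes wo: "well_ordered_set A" and lp: "x islimpt A" and c: "c > 0"
  shows "\<exists>b. \<forall>n. b n \<in> A \<and> b n < x \<and> c * (x - b (Suc n)) < x - b n"
proof -
  have step: "\<exists>z. (z \<in> A \<and> z < x) \<and> c * (x - z) < x - y" if "y < x" for y
  proof -
    have "(x - y) / c > 0" using that c by simp
    then obtain z where "z \<in> A" "x - (x - y) / c < z" "z < x"
      using limit_point_approached_from_below[OF wo lp] by blast
    then show ?thesis using c by (auto simp: field_simps)
  qed
  have "\<exists>y. y \<in> A \<and> y < x"
    using limit_point_approached_from_below[OF wo lp, of 1] by auto
  with step show ?thesis
    using dependent_nat_choice[of "\<lambda>_ y. y \<in> A \<and> y < x" "\<lambda>_ y z. c * (x - z) < x - y"]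
    by blast
qed

lemma geometric_approach_mono:
  fixes b :: "nat \<Rightarrow> real"
  assumes below: "\<And>n. b n < x" and c: "c \<ge> 1"
    and gaps: "\<And>n. c * (x - b (Suc n)) < x - b n"
  shows "mono b"
proof (rule mono_iff_le_Suc[THEN iffD2], intro allI)
  fix n
  have "x - b (Suc n) \<le> c * (x - b (Suc n))"
    using below[of "Suc n"] c by (simp add: mult_le_cancel_right1)
  then show "b n \<le> b (Suc n)" using gaps[of n] by simp
qed

fun tuple_terms :: "(nat \<Rightarrow> real) \<Rightarrow> nat \<Rightarrow> nat list \<Rightarrow> real list" where
  "tuple_terms b s [] = []"
| "tuple_terms b s (k # ks) = b (s + k) # tuple_terms b (s + k) ks"

lemma tuple_terms_basic:
  "length (tuple_terms b s ks) = length ks" "set (tuple_terms b s ks) \<subseteq> range b"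
  by (induction ks arbitrary: s) auto

lemma tuple_sum_in_sumset:
  assumes "range b \<subseteq> A" and "length ks = m"
  shows "sum_list (tuple_terms b s ks) \<in> sumset m A"
  using tuple_terms_basic[of b s ks] assms unfolding sumset_def by blast

lemma tuple_terms_append:
  "tuple_terms b s (us @ ks) = tuple_terms b s us @ tuple_terms b (s + sum_list us) ks"
  by (induction us arbitrary: s) (auto simp: add.assoc)

lemma tuple_sum_lower:
  assumes "mono b"
  shows "real (length ks) * b s \<le> sum_list (tuple_terms b s ks)"
proof (induction ks arbitrary: s)
  case (Cons k ks)
  have "b s \<le> b (s + k)" using assms by (simp add: monoD)
  moreover then have "real (length ks) * b s \<le> real (length ks) * b (s + k)"
    by (rule mult_left_mono) simp
  ultimately have "real (Suc (length ks)) * b s \<le> b (s + k) + real (length ks) * b (s + k)"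
    by (simp add: algebra_simps)
  also have "\<dots> \<le> sum_list (tuple_terms b s (k # ks))"
    using Cons[of "s + k"] by simp
  finally show ?case by simp
qed simp

lemma tuple_sum_upper:
  assumes "\<And>n. b n < x"
  shows "sum_list (tuple_terms b s ks) \<le> real (length ks) * x"
proof (induction ks arbitrary: s)
  case (Cons k ks)
  show ?case using assms[of "s + k"] Cons.IH[of "s + k"] by (simp add: algebra_simps)
qed simp

text \<open>With the first increments
  \<open>a < d\<close>, the left sum is below \<open>b p + n x\<close> and the right one at least \<open>(n + 1) b (p + 1)\<close>
  (where \<open>p = s + a\<close>, \<open>n\<close> = number of further increments); the gap condition with
  \<open>c \<ge> n + 1\<close> says exactly that \<open>b p + n x < (n + 1) b (p + 1)\<close>.\<close>
lemma tuple_sum_first_digit: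
  fixes b :: "nat \<Rightarrow> real"
  assumes mono: "mono b" and below: "\<And>n. b n < x"
    and gaps: "\<And>n. c * (x - b (Suc n)) < x - b n"
    and c: "real (length ks) + 1 \<le> c"
    and "a < d" and len: "length ks = length ls"
  shows "sum_list (tuple_terms b s (a # ks)) < sum_list (tuple_terms b s (d # ls))"
proof -
  let ?n = "real (length ks)" and ?p = "s + a"
  have next_le: "b (Suc ?p) \<le> b (s + d)" using \<open>a < d\<close> mono by (simp add: monoD)
  have "(?n + 1) * (x - b (Suc ?p)) \<le> c * (x - b (Suc ?p))"
    using c below[of "Suc ?p"] by (intro mult_right_mono) auto
  with gaps[of ?p] have "b ?p + ?n * x < (?n + 1) * b (Suc ?p)"
    by (simp add: algebra_simps)
  also have "\<dots> \<le> (?n + 1) * b (s + d)"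
    using next_le by (intro mult_left_mono) auto
  finally have "b ?p + ?n * x < b (s + d) + ?n * b (s + d)"
    by (simp add: algebra_simps)
  moreover have "sum_list (tuple_terms b ?p ks) \<le> ?n * x"
    using tuple_sum_upper below by blast
  moreover have "?n * b (s + d) \<le> sum_list (tuple_terms b (s + d) ls)"
    using tuple_sum_lower[OF mono, of ls] len by simp
  ultimately show ?thesis by simp
qed

lemma tuple_sum_lex_mono:
  fixes b :: "nat \<Rightarrow> real"
  assumes mono: "mono b" and below: "\<And>n. b n < x"
    and gaps: "\<And>n. c * (x - b (Suc n)) < x - b n"
    and c: "real (length ks) \<le> c" and lex: "(ks, ls) \<in> lex {(a, b). a < b}"
  shows "sum_list (tuple_terms b 0 ks) < sum_list (tuple_terms b 0 ls)"
proof -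
  obtain us a d ks' ls' where split: "ks = us @ a # ks'" "ls = us @ d # ls'" "a < d"
    and len: "length ks' = length ls'"
    using lex unfolding lex_conv by auto
  have "real (length ks') + 1 \<le> c" using c split(1) by simp
  then have "sum_list (tuple_terms b (sum_list us) (a # ks'))
      < sum_list (tuple_terms b (sum_list us) (d # ls'))"
    using tuple_sum_first_digit[OF mono below gaps] \<open>a < d\<close> len by blast
  then show ?thesis unfolding split tuple_terms_append by simp
qed

lemma lex_less_total:
  fixes ks ls :: "'a::linorder list"
  assumes "length ks = length ls" and "ks \<noteq> ls"
  shows "(ks, ls) \<in> lex {(a, b). a < b} \<or> (ls, ks) \<in> lex {(a, b). a < b}"
proof -
  have tot: "total {(a, b :: 'a). a < b}" by (auto simp: total_on_def)
  have "(ks, ls) \<in> lenlex {(a, b). a < b} \<or> (ls, ks) \<in> lenlex {(a, b). a < b}"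
    using total_lenlex[OF tot] assms(2) unfolding total_on_def by simp
  then show ?thesis using assms(1) by (simp add: lenlex_conv)
qed

lemma strict_mono_embedding:
  fixes f :: "'a \<Rightarrow> real"
  assumes total: "\<And>k l. k \<in> S \<Longrightarrow> l \<in> S \<Longrightarrow> k \<noteq> l \<Longrightarrow> (k, l) \<in> R \<or> (l, k) \<in> R"
    and mono: "\<And>k l. k \<in> S \<Longrightarrow> l \<in> S \<Longrightarrow> (k, l) \<in> R \<Longrightarrow> f k < f l"
  shows "inj_on f S" and "\<And>k l. k \<in> S \<Longrightarrow> l \<in> S \<Longrightarrow> (k, l) \<in> R \<longleftrightarrow> f k < f l"
proof -
  show "inj_on f S"
    by (rule inj_onI) (metis total mono less_irrefl)
  show "(k, l) \<in> R \<longleftrightarrow> f k < f l" if "k \<in> S" "l \<in> S" for k l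
    using that total mono by (metis less_asym)
qed

lemma strict_mono_image_well_ordered:
  fixes f :: "'a \<Rightarrow> real"
  assumes wf: "wf R"
    and total: "\<And>k l. k \<in> S \<Longrightarrow> l \<in> S \<Longrightarrow> k \<noteq> l \<Longrightarrow> (k, l) \<in> R \<or> (l, k) \<in> R"
    and mono: "\<And>k l. k \<in> S \<Longrightarrow> l \<in> S \<Longrightarrow> (k, l) \<in> R \<Longrightarrow> f k < f l"
  shows "well_ordered_set (f ` S)"
  unfolding well_ordered_set_def
proof (intro allI impI)
  fix T assume T: "T \<subseteq> f ` S" "T \<noteq> {}"
  define U where "U = S \<inter> f -` T"
  obtain k0 where "k0 \<in> U" using T unfolding U_def by blast
  then obtain z where z: "z \<in> U" and minimal: "\<And>k. (k, z) \<in> R \<Longrightarrow> k \<notin> U"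
    using wfE_min[OF wf] by metis
  have "f z \<le> f k" if "k \<in> U" for k
    using total[of k z] mono[of z k] minimal[of k] that z unfolding U_def
    by (cases "k = z") force+
  then show "\<exists>y\<in>T. \<forall>t\<in>T. y \<le> t" using T(1) z unfolding U_def by blast
qed

text \<open>Main theorem: the tuple sums of a sequence with gap factor \<open>m\<close> form the required copy of
  \<open>\<omega>\<^sup>m\<close> inside \<open>m A\<close>.\<close>
theorem mainTheorem4:
  fixes A :: "real set" and m :: nat
  assumes "A \<subseteq> {0..}"
    and "well_ordered_set A"
    and "\<exists>x::real. x islimpt A"
    and "m \<ge> 1"
  shows "\<exists>B. B \<subseteq> sumset m A \<and> well_ordered_set B \<and> has_type_omega_pow B m"
proof -
  obtain x where lp: "x islimpt A" using assms(3) by blast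
  have c: "real m \<ge> 1" using assms(4) by simp
  obtain b where b: "\<And>n. b n \<in> A" "\<And>n. b n < x"
    and gaps: "\<And>n. real m * (x - b (Suc n)) < x - b n"
    using geometric_approach_sequence[OF assms(2) lp, of "real m"] c by auto
  have mono: "mono b" using geometric_approach_mono[of b x "real m"] b(2) c gaps by blast
  define f where "f ks = sum_list (tuple_terms b 0 ks)" for ks
  let ?R = "lex {(i, j :: nat). i < j}"
  have total: "(k, l) \<in> ?R \<or> (l, k) \<in> ?R"
    if "k \<in> omega_pow m" "l \<in> omega_pow m" "k \<noteq> l" for k l
    using lex_less_total[of k l] that by (simp add: omega_pow_def)
  have f_mono: "f k < f l" if "k \<in> omega_pow m" "l \<in> omega_pow m" "(k, l) \<in> ?R" for k l
    using tuple_sum_lex_mono[OF mono b(2) gaps] that by (simp add: f_def omega_pow_def)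
  define B where "B = f ` omega_pow m"
  have "range b \<subseteq> A" using b(1) by blast
  then have "B \<subseteq> sumset m A"
    using tuple_sum_in_sumset[of b A] by (auto simp: B_def f_def omega_pow_def)
  moreover have "well_ordered_set B"
    unfolding B_def by (rule strict_mono_image_well_ordered[OF wf_lex[OF wf_less] total f_mono])
  moreover have "has_type_omega_pow B m"
    unfolding has_type_omega_pow_def omega_pow_less_def
  proof (intro exI[of _ f] conjI ballI)
    show "bij_betw f (omega_pow m) B"
      using strict_mono_embedding(1)[OF total f_mono] by (simp add: bij_betw_def B_def)
    show "(k, l) \<in> ?R \<longleftrightarrow> f k < f l" if "k \<in> omega_pow m" "l \<in> omega_pow m" for k l
      using strict_mono_embedding(2)[OF total f_mono that] .
  qed
  ultimately show ?thesis by blast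
qed

end
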